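(* Let $\mu$ be a finite positive Borel measure on $\mathbb{R}$ and let $\alpha>0$. Let $\nu$ be the measure $d\nu(x)=\frac{d\mu(x)}{1+|x|^\alpha}$. Then for every $1\leqslant p\leqslant\infty$, $\mathcal{G}^p_\mu=\mathcal{G}^p_\nu$.
   Context: For a finite positive Borel measure $\mu$ on $\mathbb{R}$ and $1\leqslant p\leqslant\infty$, $$\mathcal{G}^p_\mu=\sup\Big\{a>0:\ \exists\, f\in L^p(\mu),\ f\neq 0,\ \int f(x)e^{i\lambda x}\,d\mu(x)=0\ \ \forall\lambda\in[0,a]\Big\},$$ with $\mathcal{G}^p_\mu=0$ if the set is empty. *)

theory Defs
  imports "HOL-Analysis.Analysis"
begin

definition in_Lp :: "'a measure \<Rightarrow> ennreal \<Rightarrow> ('a \<Rightarrow> complex) \<Rightarrow> bool" where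
  "in_Lp M p f \<longleftrightarrow> f \<in> borel_measurable M \<and>
     (if p = \<infinity> then (\<exists>C. AE x in M. norm (f x) \<le> C)
      else (\<integral>\<^sup>+ x. ennreal (norm (f x) powr enn2real p) \<partial>M) < \<infinity>)"

text \<open>Gap-type quantity G^p_M; value in [0, infinity], Sup of the empty set is 0.\<close>
definition gap_G :: "real measure \<Rightarrow> ennreal \<Rightarrow> ennreal" where
  "gap_G M p = Sup (ennreal ` {a::real. a > 0 \<and>
      (\<exists>f. in_Lp M p f \<and> \<not> (AE x in M. f x = 0) \<and>
        (\<forall>t\<in>{0..a}. (\<integral>x. f x * exp (\<i> * complex_of_real (t * x)) \<partial>M) = 0))})"

end

theory Submission
  imports Defs
begin

text \<open>Write \<open>w x = 1 / (1 + \<bar>x\<bar> powr \<alpha>)\<close>, so \<open>d\<nu> = w d\<mu>\<close> with \<open>0 < w \<le> 1\<close>.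
  If \<open>f \<in> L\<^sup>p(\<nu>)\<close> has \<open>\<integral> f(x) exp(i t x) d\<nu> = 0\<close> for \<open>t \<in> [0, a]\<close>, then \<open>w f \<in> L\<^sup>p(\<mu>)\<close>
  does the same for \<open>\<mu>\<close>; hence \<open>G(\<nu>) \<le> G(\<mu>)\<close>.

  Conversely let \<open>f \<in> L\<^sup>p(\<mu>)\<close> have vanishing Fourier transform on \<open>[0, a]\<close>. The kernel
  \<open>H\<^sub>d(x) = \<integral>\<^sub>0\<^sup>d exp(s (1 + i x)) ds\<close> has no zeros and is \<open>O(1/\<bar>x\<bar>)\<close>, and by Fubini the
  Fourier transform of \<open>f H\<^sub>d\<close> vanishes on \<open>[0, a - d]\<close>. For \<open>N \<ge> \<alpha>\<close>, the function
  \<open>g = f H\<^sub>d\<^sup>N / w\<close> is bounded by a multiple of \<open>\<bar>f\<bar>\<close>, so it is a nonzero element of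
  \<open>L\<^sup>p(\<nu>)\<close> whose Fourier transform with respect to \<open>\<nu>\<close> (that of \<open>f H\<^sub>d\<^sup>N\<close> with respect to
  \<open>\<mu>\<close>) vanishes on \<open>[0, a - N d]\<close>. Letting \<open>d \<rightarrow> 0\<close> gives \<open>G(\<mu>) \<le> G(\<nu>)\<close>.\<close>

definition fourier_vanishes_on :: "real measure \<Rightarrow> (real \<Rightarrow> complex) \<Rightarrow> real \<Rightarrow> bool" where
  "fourier_vanishes_on M f a \<longleftrightarrow>
     (\<forall>t\<in>{0..a}. (\<integral>x. f x * exp (\<i> * complex_of_real (t * x)) \<partial>M) = 0)"

lemma fourier_vanishes_on_mono:
  "fourier_vanishes_on M f a \<Longrightarrow> b \<le> a \<Longrightarrow> fourier_vanishes_on M f b"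
  unfolding fourier_vanishes_on_def by auto

definition gap_set :: "real measure \<Rightarrow> ennreal \<Rightarrow> real set" where
  "gap_set M p = {a. a > 0 \<and>
     (\<exists>f. in_Lp M p f \<and> \<not> (AE x in M. f x = 0) \<and> fourier_vanishes_on M f a)}"

lemma gap_G_eq_Sup_gap_set: "gap_G M p = Sup (ennreal ` gap_set M p)"
  unfolding gap_G_def gap_set_def fourier_vanishes_on_def ..

lemma Sup_ennreal_eq_if_dense_below:
  fixes S T :: "real set"
  assumes "S \<subseteq> T" and dense: "\<And>a b. a \<in> T \<Longrightarrow> 0 < b \<Longrightarrow> b < a \<Longrightarrow> b \<in> S"
  shows "Sup (ennreal ` S) = Sup (ennreal ` T)"
proof (rule antisym)
  show "Sup (ennreal ` S) \<le> Sup (ennreal ` T)"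
    using assms(1) by (intro Sup_subset_mono image_mono)
  show "Sup (ennreal ` T) \<le> Sup (ennreal ` S)"
  proof (rule Sup_least, safe)
    fix a assume a: "a \<in> T"
    show "ennreal a \<le> Sup (ennreal ` S)"
    proof (rule dense_le)
      fix y assume y: "y < ennreal a"
      then obtain r where r: "y = ennreal r" "0 \<le> r" "r < a"
        by (metis ennreal_cases ennreal_less_iff ennreal_less_top order.strict_trans
            top.not_eq_extremum)
      then have "(r + a) / 2 \<in> S" using dense[OF a] by simp
      moreover have "y \<le> ennreal ((r + a) / 2)" using r by (simp add: ennreal_leI)
      ultimately show "y \<le> Sup (ennreal ` S)" by (meson Sup_upper image_eqI order_trans)
    qed
  qed
qed

lemma in_Lp_imp_integrable:
  assumes "finite_measure M" and "1 \<le> p" and L: "in_Lp M p f"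
  shows "integrable M f"
proof -
  interpret finite_measure M by fact
  have f_meas[measurable]: "f \<in> borel_measurable M" using L unfolding in_Lp_def by auto
  show ?thesis
  proof (cases "p = \<infinity>")
    case True
    then obtain C where "AE x in M. norm (f x) \<le> C" using L unfolding in_Lp_def by auto
    then show ?thesis using integrable_const_bound f_meas by blast
  next
    case False
    define q where "q = enn2real p"
    have "q \<ge> 1" unfolding q_def using enn2real_mono[OF \<open>1 \<le> p\<close>] False by (simp add: less_top)
    then have pointwise: "norm (f x) \<le> 1 + norm (f x) powr q" for x
    proof (cases "norm (f x) \<le> 1")
      case False
      then have "norm (f x) powr 1 \<le> norm (f x) powr q" using \<open>q \<ge> 1\<close> by (intro powr_mono) auto
      then show ?thesis by simp
    qed (simp add: add_increasing2)
    have "(\<integral>\<^sup>+ x. ennreal (norm (f x)) \<partial>M) \<le> (\<integral>\<^sup>+ x. 1 + ennreal (norm (f x) powr q) \<partial>M)"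
      using pointwise by (intro nn_integral_mono) (metis ennreal_1 ennreal_leI ennreal_plus powr_ge_zero zero_le_one)
    also have "\<dots> = (\<integral>\<^sup>+ x. 1 \<partial>M) + (\<integral>\<^sup>+ x. ennreal (norm (f x) powr q) \<partial>M)"
      by (intro nn_integral_add) auto
    also have "\<dots> < \<infinity>"
      using L False unfolding in_Lp_def q_def by (simp add: less_top[symmetric] emeasure_real)
    finally show ?thesis by (intro integrableI_bounded) auto
  qed
qed

lemma in_Lp_bound:
  assumes L: "in_Lp M p f" and g_meas: "g \<in> borel_measurable M"
    and "0 \<le> C" and bound: "\<And>x. norm (g x) \<le> C * norm (f x)"
  shows "in_Lp M p g"
proof (cases "p = \<infinity>")
  case True
  then obtain B where "AE x in M. norm (f x) \<le> B" using L unfolding in_Lp_def by auto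
  then have "AE x in M. norm (g x) \<le> C * B"
    by eventually_elim (meson \<open>0 \<le> C\<close> bound mult_left_mono order_trans)
  then show ?thesis using True g_meas unfolding in_Lp_def by auto
next
  case False
  define q where "q = enn2real p"
  have "(\<integral>\<^sup>+ x. ennreal (norm (g x) powr q) \<partial>M) \<le> (\<integral>\<^sup>+ x. C powr q * ennreal (norm (f x) powr q) \<partial>M)"
  proof (intro nn_integral_mono)
    fix x
    have "norm (g x) powr q \<le> (C * norm (f x)) powr q"
      using bound by (intro powr_mono2) (auto simp: q_def)
    also have "\<dots> = C powr q * norm (f x) powr q" using \<open>0 \<le> C\<close> by (simp add: powr_mult)
    finally show "ennreal (norm (g x) powr q) \<le> C powr q * ennreal (norm (f x) powr q)"
      by (simp add: ennreal_mult'[symmetric] ennreal_leI)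
  qed
  also have "\<dots> = C powr q * (\<integral>\<^sup>+ x. ennreal (norm (f x) powr q) \<partial>M)"
    using L unfolding in_Lp_def by (intro nn_integral_cmult) auto
  also have "\<dots> < \<infinity>"
    using L False unfolding in_Lp_def q_def by (simp add: ennreal_mult_less_top)
  finally show ?thesis using False g_meas unfolding in_Lp_def q_def by auto
qed

lemma in_Lp_density_le_one:
  assumes L: "in_Lp M p g" and w_meas: "w \<in> borel_measurable M" and w_le: "\<And>x. w x \<le> 1"
  shows "in_Lp (density M (\<lambda>x. ennreal (w x))) p g"
proof (cases "p = \<infinity>")
  case True
  then show ?thesis
    using L w_meas unfolding in_Lp_def by (auto simp: AE_density elim!: AE_mp)
next
  case False
  define q where "q = enn2real p"
  have "(\<integral>\<^sup>+ x. ennreal (norm (g x) powr q) \<partial>density M (\<lambda>x. ennreal (w x)))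
      = (\<integral>\<^sup>+ x. ennreal (w x) * ennreal (norm (g x) powr q) \<partial>M)"
    using L w_meas unfolding in_Lp_def by (intro nn_integral_density) auto
  also have "\<dots> \<le> (\<integral>\<^sup>+ x. ennreal (norm (g x) powr q) \<partial>M)"
    using w_le by (intro nn_integral_mono) (metis ennreal_le_1 mult_1 mult_right_mono zero_le)
  also have "\<dots> < \<infinity>" using L False unfolding in_Lp_def q_def by simp
  finally show ?thesis using L False unfolding in_Lp_def q_def by auto
qed

lemma in_Lp_density_imp_in_Lp_mult:
  assumes L: "in_Lp (density M (\<lambda>x. ennreal (w x))) p f" and "1 \<le> p"
    and w_meas: "w \<in> borel_measurable M" and w_pos: "\<And>x. 0 < w x" and w_le: "\<And>x. w x \<le> 1"
  shows "in_Lp M p (\<lambda>x. complex_of_real (w x) * f x)"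
proof -
  have f_meas[measurable]: "f \<in> borel_measurable M"
    using L unfolding in_Lp_def by simp
  have norm_wf: "norm (complex_of_real (w x) * f x) = w x * norm (f x)" for x
    using w_pos[of x] by (simp add: norm_mult)
  show ?thesis
  proof (cases "p = \<infinity>")
    case True
    then obtain C where "AE x in M. 0 < w x \<longrightarrow> norm (f x) \<le> C"
      using L w_meas unfolding in_Lp_def by (auto simp: AE_density)
    then have "AE x in M. norm (complex_of_real (w x) * f x) \<le> C"
      by eventually_elim
        (metis w_pos w_le norm_wf mult_left_le_one_le norm_ge_zero order_trans less_imp_le)
    then show ?thesis using True w_meas unfolding in_Lp_def by auto
  next
    case False
    define q where "q = enn2real p"
    have "q \<ge> 1" unfolding q_def using enn2real_mono[OF \<open>1 \<le> p\<close>] False by (simp add: less_top)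
    have "(\<integral>\<^sup>+ x. ennreal (norm (complex_of_real (w x) * f x) powr q) \<partial>M)
        \<le> (\<integral>\<^sup>+ x. ennreal (w x) * ennreal (norm (f x) powr q) \<partial>M)"
    proof (intro nn_integral_mono)
      fix x
      have "w x powr q \<le> w x powr 1"
        using w_pos[of x] w_le[of x] \<open>q \<ge> 1\<close> by (intro powr_mono') auto
      then have "norm (complex_of_real (w x) * f x) powr q \<le> w x * norm (f x) powr q"
        using w_pos[of x] by (simp add: norm_wf powr_mult mult_right_mono)
      then show "ennreal (norm (complex_of_real (w x) * f x) powr q)
          \<le> ennreal (w x) * ennreal (norm (f x) powr q)"
        using w_pos[of x] by (simp add: ennreal_mult[symmetric] ennreal_leI)
    qed
    also have "\<dots> = (\<integral>\<^sup>+ x. ennreal (norm (f x) powr q) \<partial>density M (\<lambda>x. ennreal (w x)))"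
      using w_meas by (intro nn_integral_density[symmetric]) auto
    also have "\<dots> < \<infinity>" using L False unfolding in_Lp_def q_def by simp
    finally show ?thesis using False w_meas unfolding in_Lp_def q_def by auto
  qed
qed

lemma AE_density_pos_iff:
  assumes "w \<in> borel_measurable M" and "\<And>x. 0 < w x"
  shows "(AE x in density M (\<lambda>x. ennreal (w x)). P x) \<longleftrightarrow> (AE x in M. P x)"
  using assms by (simp add: AE_density)

lemma integral_density_complex:
  fixes f :: "'a \<Rightarrow> complex"
  assumes "f \<in> borel_measurable M" and "w \<in> borel_measurable M" and "\<And>x. 0 \<le> w x"
  shows "(\<integral>x. f x \<partial>density M (\<lambda>x. ennreal (w x))) = (\<integral>x. complex_of_real (w x) * f x \<partial>M)"
  using assms by (simp add: integral_density scaleR_conv_of_real)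

text \<open>The factor \<open>e\<^sup>s\<close> makes the kernel zero-free: \<open>\<integral>\<^sub>0\<^sup>d e\<^sup>i\<^sup>s\<^sup>x ds\<close> alone vanishes at
  \<open>x \<in> 2\<pi>\<int>/d\<close>.\<close>

definition exp_kernel :: "real \<Rightarrow> real \<Rightarrow> complex" where
  "exp_kernel d x = (LBINT s:{0..d}. exp (complex_of_real s * (1 + \<i> * complex_of_real x)))"

lemma one_plus_i_times_real_nonzero: "1 + \<i> * complex_of_real x \<noteq> 0"
  by (simp add: complex_eq_iff)

lemma norm_one_plus_i_times_real: "max 1 \<bar>x\<bar> \<le> norm (1 + \<i> * complex_of_real x)"
proof -
  have "norm (1 + \<i> * complex_of_real x) = sqrt (1 + x\<^sup>2)" by (simp add: cmod_def)
  moreover have "max 1 \<bar>x\<bar> \<le> sqrt (1 + x\<^sup>2)"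
    by (metis max.bounded_iff real_sqrt_abs real_sqrt_le_mono real_sqrt_one
        le_add_same_cancel1 le_add_same_cancel2 zero_le_one zero_le_power2)
  ultimately show ?thesis by simp
qed

lemma exp_kernel_eq:
  assumes "d \<ge> 0"
  shows "exp_kernel d x = (exp (complex_of_real d * (1 + \<i> * complex_of_real x)) - 1)
                          / (1 + \<i> * complex_of_real x)"
proof -
  define z where "z = 1 + \<i> * complex_of_real x"
  have "z \<noteq> 0" unfolding z_def by (rule one_plus_i_times_real_nonzero)
  have "exp_kernel d x = (LBINT s=ereal 0..ereal d. exp (complex_of_real s * z))"
    unfolding exp_kernel_def z_def[symmetric]
    using interval_integral_Icc[of 0 d "\<lambda>s. exp (complex_of_real s * z)"] assms by simp
  also have "\<dots> = exp (complex_of_real d * z) / z - exp (complex_of_real 0 * z) / z"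
    using \<open>z \<noteq> 0\<close>
    by (intro interval_integral_FTC_finite continuous_intros has_vector_derivative_real_field)
      (auto intro!: derivative_eq_intros)
  finally show ?thesis by (simp add: z_def diff_divide_distrib)
qed

lemma norm_exp_of_real_times_one_plus_i:
  "norm (exp (complex_of_real d * (1 + \<i> * complex_of_real x))) = exp d"
  by simp

lemma exp_kernel_nonzero:
  assumes "d > 0" shows "exp_kernel d x \<noteq> 0"
proof
  assume "exp_kernel d x = 0"
  then have "exp (complex_of_real d * (1 + \<i> * complex_of_real x)) = 1"
    using exp_kernel_eq[of d x] one_plus_i_times_real_nonzero[of x] assms by simp
  then have "exp d = 1" by (metis norm_exp_of_real_times_one_plus_i norm_one)
  then show False using assms by simp
qed

lemma norm_exp_kernel_le:
  assumes "d \<ge> 0" shows "norm (exp_kernel d x) \<le> (exp d + 1) / max 1 \<bar>x\<bar>"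
proof -
  have "norm (exp (complex_of_real d * (1 + \<i> * complex_of_real x)) - 1) \<le> exp d + 1"
    using norm_triangle_ineq4[of "exp (complex_of_real d * (1 + \<i> * complex_of_real x))" 1]
    unfolding norm_exp_of_real_times_one_plus_i by simp
  then show ?thesis
    using exp_kernel_eq[OF assms, of x] norm_one_plus_i_times_real[of x]
    by (simp add: norm_divide frac_le)
qed

lemma exp_kernel_measurable[measurable]: "exp_kernel d \<in> borel_measurable borel"
proof (cases "d \<ge> 0")
  case True
  then have "exp_kernel d = (\<lambda>x. (exp (complex_of_real d * (1 + \<i> * complex_of_real x)) - 1)
                               / (1 + \<i> * complex_of_real x))"
    using exp_kernel_eq by auto
  also have "\<dots> \<in> borel_measurable borel"
    by (intro borel_measurable_continuous_onI continuous_intros)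
      (simp add: one_plus_i_times_real_nonzero)
  finally show ?thesis .
next
  case False
  then have "{0..d} = {}" by simp
  then have "exp_kernel d = (\<lambda>_. 0)" by (simp add: exp_kernel_def fun_eq_iff set_lebesgue_integral_def)
  then show ?thesis by simp
qed

lemma norm_exp_kernel_le_const:
  assumes "d \<ge> 0" shows "norm (exp_kernel d x) \<le> exp d + 1"
proof -
  have "0 < exp d + 1" by (simp add: add_pos_pos)
  then have "(exp d + 1) / max 1 \<bar>x\<bar> \<le> (exp d + 1) / 1"
    by (intro divide_left_mono) auto
  then show ?thesis using norm_exp_kernel_le[OF assms, of x] by (metis div_by_1 order_trans)
qed

lemma integral_mult_exp_kernel:
  fixes \<mu> :: "real measure" and g :: "real \<Rightarrow> complex"
  assumes sets: "sets \<mu> = sets borel" and "sigma_finite_measure \<mu>" and g: "integrable \<mu> g"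
  shows "(\<integral>x. g x * exp_kernel d x * exp (\<i> * complex_of_real (t * x)) \<partial>\<mu>)
       = (LBINT s:{0..d}. exp s *\<^sub>R (\<integral>x. g x * exp (\<i> * complex_of_real ((t + s) * x)) \<partial>\<mu>))"
proof -
  interpret sigma_finite_measure \<mu> by fact
  interpret P: pair_sigma_finite lborel \<mu> ..
  define e where "e s x = exp (\<i> * complex_of_real (s * x))" for s x :: real
  define F where "F s x = indicator {0..d} s *\<^sub>R (exp s *\<^sub>R (g x * e (t + s) x))" for s x
  have g_meas[measurable]: "g \<in> borel_measurable borel"
    using borel_measurable_integrable[OF g] measurable_cong_sets[OF sets refl] by blast
  have "(\<lambda>p. F (fst p) (snd p)) \<in> borel_measurable (borel \<Otimes>\<^sub>M borel)"
    unfolding F_def e_def by measurable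
  moreover have "sets (lborel \<Otimes>\<^sub>M \<mu>) = sets (borel \<Otimes>\<^sub>M borel)"
    using sets by (intro sets_pair_measure_cong) auto
  ultimately have F_meas: "(\<lambda>p. F (fst p) (snd p)) \<in> borel_measurable (lborel \<Otimes>\<^sub>M \<mu>)"
    using measurable_cong_sets by blast
  have norm_F: "(\<integral>x. norm (F s x) \<partial>\<mu>) = exp s * (\<integral>x. norm (g x) \<partial>\<mu>) * indicator {0..d} s" for s
    by (simp add: F_def e_def norm_mult indicator_def)
  have "integrable (lborel \<Otimes>\<^sub>M \<mu>) (\<lambda>p. F (fst p) (snd p))"
  proof (rule P.Fubini_integrable[OF F_meas])
    show "integrable lborel (\<lambda>s. \<integral>x. norm (F (fst (s, x)) (snd (s, x))) \<partial>\<mu>)"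
      unfolding fst_conv snd_conv norm_F
      by (intro borel_integrable_atLeastAtMost continuous_intros)
    show "AE s in lborel. integrable \<mu> (\<lambda>x. F (fst (s, x)) (snd (s, x)))"
      unfolding F_def e_def fst_conv snd_conv
      by (intro AE_I2 integrable_scaleR_right Bochner_Integration.integrable_bound[OF g])
        (auto simp: norm_mult measurable_cong_sets[OF sets refl])
  qed
  then have "(\<integral>x. (\<integral>s. F s x \<partial>lborel) \<partial>\<mu>) = (\<integral>s. (\<integral>x. F s x \<partial>\<mu>) \<partial>lborel)"
    using P.Fubini_integral[of F] by (simp add: split_beta')
  moreover have "(\<integral>s. F s x \<partial>lborel) = g x * exp_kernel d x * e t x" for x
  proof -
    have "F s x = (g x * e t x) * (indicator {0..d} s *\<^sub>R
                   exp (complex_of_real s * (1 + \<i> * complex_of_real x)))" for s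
      by (simp add: F_def e_def scaleR_conv_of_real indicator_def algebra_simps
          flip: exp_add exp_of_real)
    then have "(\<integral>s. F s x \<partial>lborel) = (g x * e t x) * exp_kernel d x"
      unfolding exp_kernel_def set_lebesgue_integral_def by (simp only: integral_mult_right_zero)
    then show ?thesis by (simp add: mult_ac)
  qed
  ultimately show ?thesis
    by (simp add: F_def e_def set_lebesgue_integral_def)
qed

lemma fourier_vanishes_on_mult_exp_kernel:
  fixes \<mu> :: "real measure" and g :: "real \<Rightarrow> complex"
  assumes "sets \<mu> = sets borel" and "sigma_finite_measure \<mu>"
    and "integrable \<mu> g" and vanish: "fourier_vanishes_on \<mu> g a"
  shows "fourier_vanishes_on \<mu> (\<lambda>x. g x * exp_kernel d x) (a - d)"
  unfolding fourier_vanishes_on_def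
proof
  fix t assume t: "t \<in> {0..a - d}"
  have "(LBINT s:{0..d}. exp s *\<^sub>R (\<integral>x. g x * exp (\<i> * complex_of_real ((t + s) * x)) \<partial>\<mu>))
      = (LBINT s:{0..d}. 0)"
  proof (intro set_lebesgue_integral_cong allI impI)
    fix s assume "s \<in> {0..d}"
    then have "t + s \<in> {0..a}" using t by auto
    then have "(\<integral>x. g x * exp (\<i> * complex_of_real ((t + s) * x)) \<partial>\<mu>) = 0"
      using vanish unfolding fourier_vanishes_on_def by blast
    then show "exp s *\<^sub>R (\<integral>x. g x * exp (\<i> * complex_of_real ((t + s) * x)) \<partial>\<mu>) = 0"
      by simp
  qed simp
  then show "(\<integral>x. g x * exp_kernel d x * exp (\<i> * complex_of_real (t * x)) \<partial>\<mu>) = 0"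
    using integral_mult_exp_kernel[OF assms(1-3)] by simp
qed

lemma fourier_vanishes_on_mult_exp_kernel_power:
  fixes \<mu> :: "real measure" and f :: "real \<Rightarrow> complex"
  assumes sets: "sets \<mu> = sets borel" and "finite_measure \<mu>"
    and f: "integrable \<mu> f" and "0 \<le> d" and vanish: "fourier_vanishes_on \<mu> f a"
  shows "fourier_vanishes_on \<mu> (\<lambda>x. f x * exp_kernel d x ^ k) (a - k * d)"
proof (induction k)
  case 0
  then show ?case using vanish by simp
next
  case (Suc k)
  have "borel_measurable \<mu> = borel_measurable borel"
    by (rule measurable_cong_sets[OF sets refl])
  then have [measurable]: "exp_kernel d \<in> borel_measurable \<mu>" "f \<in> borel_measurable \<mu>"
    using f by auto
  have "integrable \<mu> (\<lambda>x. f x * exp_kernel d x ^ k)"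
  proof (rule Bochner_Integration.integrable_bound)
    show "integrable \<mu> (\<lambda>x. (exp d + 1) ^ k * norm (f x))" using f by simp
    show "AE x in \<mu>. norm (f x * exp_kernel d x ^ k) \<le> norm ((exp d + 1) ^ k * norm (f x))"
      using norm_exp_kernel_le_const[OF \<open>0 \<le> d\<close>]
      by (intro AE_I2) (simp add: norm_mult norm_power mult.commute mult_left_mono power_mono)
  qed simp
  from fourier_vanishes_on_mult_exp_kernel[OF sets finite_measure.axioms(1)[OF \<open>finite_measure \<mu>\<close>]
      this Suc.IH]
  show ?case by (simp add: algebra_simps)
qed

locale bounded_weight =
  fixes \<mu> :: "real measure" and w :: "real \<Rightarrow> real"
  assumes sets_eq_borel: "sets \<mu> = sets borel" and finite_measure: "finite_measure \<mu>"
    and weight_measurable[measurable]: "w \<in> borel_measurable borel"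
    and weight_pos: "0 < w x" and weight_le_one: "w x \<le> 1"
begin

abbreviation weighted :: "real measure" where
  "weighted \<equiv> density \<mu> (\<lambda>x. ennreal (w x))"

lemma weight_nonzero: "w x \<noteq> 0"
  using weight_pos[of x] by simp

lemma borel_measurable_eq: "borel_measurable \<mu> = borel_measurable borel"
  by (rule measurable_cong_sets[OF sets_eq_borel refl])

lemma weight_measurable_\<mu>[measurable]: "w \<in> borel_measurable \<mu>"
  by (simp add: borel_measurable_eq)

lemma AE_weighted_iff: "(AE x in weighted. P x) \<longleftrightarrow> (AE x in \<mu>. P x)"
  by (rule AE_density_pos_iff) (auto simp: weight_pos)

lemma integral_weighted:
  "f \<in> borel_measurable borel \<Longrightarrow> (\<integral>x. f x \<partial>weighted) = (\<integral>x. complex_of_real (w x) * f x \<partial>\<mu>)"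
  by (rule integral_density_complex) (auto simp: borel_measurable_eq less_imp_le weight_pos)

lemma fourier_vanishes_on_weighted_iff:
  assumes "f \<in> borel_measurable borel"
  shows "fourier_vanishes_on weighted f a \<longleftrightarrow> fourier_vanishes_on \<mu> (\<lambda>x. complex_of_real (w x) * f x) a"
  unfolding fourier_vanishes_on_def using assms by (simp add: integral_weighted mult.assoc)

lemma gap_set_weighted_subset:
  assumes "1 \<le> p" shows "gap_set weighted p \<subseteq> gap_set \<mu> p"
proof
  fix a assume "a \<in> gap_set weighted p"
  then obtain f where a: "a > 0" and L: "in_Lp weighted p f" and nonzero: "\<not> (AE x in \<mu>. f x = 0)"
    and vanish: "fourier_vanishes_on weighted f a"
    unfolding gap_set_def AE_weighted_iff by blast
  have [measurable]: "f \<in> borel_measurable borel"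
    using L unfolding in_Lp_def by (simp add: borel_measurable_eq)
  have "in_Lp \<mu> p (\<lambda>x. complex_of_real (w x) * f x)"
    using L assms by (rule in_Lp_density_imp_in_Lp_mult) (auto simp: weight_pos weight_le_one)
  moreover have "\<not> (AE x in \<mu>. complex_of_real (w x) * f x = 0)"
  proof
    assume "AE x in \<mu>. complex_of_real (w x) * f x = 0"
    then have "AE x in \<mu>. f x = 0"
      by eventually_elim (simp add: weight_nonzero)
    with nonzero show False ..
  qed
  moreover have "fourier_vanishes_on \<mu> (\<lambda>x. complex_of_real (w x) * f x) a"
    using vanish by (simp add: fourier_vanishes_on_weighted_iff)
  ultimately show "a \<in> gap_set \<mu> p" using a unfolding gap_set_def by blast
qed

end

locale polynomial_weight = bounded_weight +
  fixes C :: real and N :: nat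
  assumes inverse_weight_le: "1 / w x \<le> C * max 1 \<bar>x\<bar> ^ N"
begin

lemma coefficient_nonneg: "0 \<le> C"
proof -
  have "1 / w 0 \<le> C" using inverse_weight_le[of 0] by simp
  moreover have "0 < 1 / w 0" using weight_pos[of 0] by simp
  ultimately show ?thesis by linarith
qed

lemma norm_exp_kernel_power_div_weight_le:
  assumes "0 \<le> d"
  shows "norm (exp_kernel d x) ^ N / w x \<le> C * (exp d + 1) ^ N"
proof -
  define m where "m = max 1 \<bar>x\<bar>"
  have "m \<ge> 1" unfolding m_def by simp
  have "norm (exp_kernel d x) ^ N \<le> ((exp d + 1) / m) ^ N"
    using norm_exp_kernel_le[OF assms] unfolding m_def by (intro power_mono) auto
  then have "norm (exp_kernel d x) ^ N / w x \<le> ((exp d + 1) / m) ^ N * (1 / w x)"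
    using weight_pos[of x] by (simp add: divide_right_mono)
  also have "\<dots> \<le> ((exp d + 1) / m) ^ N * (C * m ^ N)"
    using inverse_weight_le[of x] unfolding m_def
    by (intro mult_left_mono) (auto simp: add_nonneg_nonneg)
  also have "\<dots> = C * (exp d + 1) ^ N"
    using \<open>m \<ge> 1\<close> by (simp add: power_divide)
  finally show ?thesis .
qed

lemma gap_set_dense_below:
  assumes "1 \<le> p" and a: "a \<in> gap_set \<mu> p" and b: "0 < b" "b < a"
  shows "b \<in> gap_set weighted p"
proof -
  obtain f where L: "in_Lp \<mu> p f" and nonzero: "\<not> (AE x in \<mu>. f x = 0)"
    and vanish: "fourier_vanishes_on \<mu> f a"
    using a unfolding gap_set_def by blast
  have [measurable]: "f \<in> borel_measurable borel"
    using L unfolding in_Lp_def by (simp add: borel_measurable_eq)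
  define d where "d = (a - b) / max 1 (real N)"
  have "d > 0" using b unfolding d_def by simp
  have "b \<le> a - real N * d"
    using b unfolding d_def by (cases "N = 0") (auto simp: field_simps)
  define g where "g x = f x * exp_kernel d x ^ N / complex_of_real (w x)" for x
  have [measurable]: "g \<in> borel_measurable borel" unfolding g_def by measurable
  have norm_g: "norm (g x) \<le> C * (exp d + 1) ^ N * norm (f x)" for x
  proof -
    have "norm (g x) = norm (f x) * (norm (exp_kernel d x) ^ N / w x)"
      unfolding g_def using weight_pos[of x] by (simp add: norm_mult norm_divide norm_power)
    also have "\<dots> \<le> norm (f x) * (C * (exp d + 1) ^ N)"
      using norm_exp_kernel_power_div_weight_le \<open>d > 0\<close> by (intro mult_left_mono) auto
    finally show ?thesis by (simp add: mult_ac)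
  qed
  have "in_Lp \<mu> p g"
    using coefficient_nonneg by (intro in_Lp_bound[OF L _ _ norm_g]) (simp_all add: borel_measurable_eq)
  then have "in_Lp weighted p g"
    by (rule in_Lp_density_le_one) (auto simp: weight_le_one)
  moreover have "\<not> (AE x in weighted. g x = 0)"
  proof
    assume "AE x in weighted. g x = 0"
    then have "AE x in \<mu>. f x = 0"
      unfolding AE_weighted_iff g_def
      by eventually_elim (simp add: exp_kernel_nonzero[OF \<open>d > 0\<close>] weight_nonzero)
    with nonzero show False ..
  qed
  moreover have "fourier_vanishes_on weighted g b"
  proof -
    have "fourier_vanishes_on \<mu> (\<lambda>x. f x * exp_kernel d x ^ N) (a - real N * d)"
      using in_Lp_imp_integrable[OF finite_measure \<open>1 \<le> p\<close> L] \<open>d > 0\<close> vanish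
      by (intro fourier_vanishes_on_mult_exp_kernel_power[OF sets_eq_borel finite_measure]) auto
    moreover have "(\<lambda>x. f x * exp_kernel d x ^ N) = (\<lambda>x. complex_of_real (w x) * g x)"
      unfolding g_def by (simp add: fun_eq_iff weight_nonzero)
    ultimately have "fourier_vanishes_on \<mu> (\<lambda>x. complex_of_real (w x) * g x) b"
      using \<open>b \<le> a - real N * d\<close> by (metis fourier_vanishes_on_mono)
    then show ?thesis by (simp add: fourier_vanishes_on_weighted_iff)
  qed
  ultimately show ?thesis using b unfolding gap_set_def by blast
qed

theorem gap_G_weighted_eq:
  assumes "1 \<le> p" shows "gap_G \<mu> p = gap_G weighted p"
  unfolding gap_G_eq_Sup_gap_set
  by (rule Sup_ennreal_eq_if_dense_below[symmetric,
        OF gap_set_weighted_subset[OF assms] gap_set_dense_below[OF assms]])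

end

lemma one_plus_abs_powr_le:
  fixes x \<alpha> :: real
  assumes "0 \<le> \<alpha>"
  shows "1 + \<bar>x\<bar> powr \<alpha> \<le> 2 * max 1 \<bar>x\<bar> ^ nat \<lceil>\<alpha>\<rceil>"
proof -
  define m where "m = max 1 \<bar>x\<bar>"
  have "m \<ge> 1" unfolding m_def by simp
  have "\<bar>x\<bar> powr \<alpha> \<le> m powr \<alpha>" unfolding m_def using assms by (intro powr_mono2) auto
  also have "\<dots> \<le> m powr real (nat \<lceil>\<alpha>\<rceil>)"
    using \<open>m \<ge> 1\<close> real_nat_ceiling_ge[of \<alpha>] by (intro powr_mono) auto
  also have "\<dots> = m ^ nat \<lceil>\<alpha>\<rceil>" using \<open>m \<ge> 1\<close> by (simp add: powr_realpow)
  moreover have "1 \<le> m ^ nat \<lceil>\<alpha>\<rceil>" using \<open>m \<ge> 1\<close> by (rule one_le_power)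
  ultimately show ?thesis unfolding m_def by linarith
qed

theorem lemma1:
  fixes \<mu> :: "real measure" and \<alpha> :: real and p :: ennreal
  assumes "sets \<mu> = sets borel" and "finite_measure \<mu>"
    and "\<alpha> > 0" and "1 \<le> p"
  shows "gap_G \<mu> p = gap_G (density \<mu> (\<lambda>x. ennreal (1 / (1 + \<bar>x\<bar> powr \<alpha>)))) p"
proof -
  interpret polynomial_weight \<mu> "\<lambda>x. 1 / (1 + \<bar>x\<bar> powr \<alpha>)" 2 "nat \<lceil>\<alpha>\<rceil>"
  proof (intro polynomial_weight.intro bounded_weight.intro polynomial_weight_axioms.intro)
    show "(\<lambda>x. 1 / (1 + \<bar>x\<bar> powr \<alpha>)) \<in> borel_measurable borel" by measurable
    fix x :: real
    have "0 < 1 + \<bar>x\<bar> powr \<alpha>" by (simp add: add_pos_nonneg)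
    then show "0 < 1 / (1 + \<bar>x\<bar> powr \<alpha>)" and "1 / (1 + \<bar>x\<bar> powr \<alpha>) \<le> 1"
      by simp_all
    show "1 / (1 / (1 + \<bar>x\<bar> powr \<alpha>)) \<le> 2 * max 1 \<bar>x\<bar> ^ nat \<lceil>\<alpha>\<rceil>"
      using one_plus_abs_powr_le[of \<alpha> x] \<open>\<alpha> > 0\<close> by simp
  qed (fact assms)+
  show ?thesis using gap_G_weighted_eq[OF \<open>1 \<le> p\<close>] .
qed

end
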